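(* There is an absolute constant $C>0$ such that the following holds. Let $\varepsilon>0$, let $\pi$ be a target distribution on $\mathbb{R}^d$ satisfying the Cheeger isoperimetric inequality with some constant $\mathsf{Ch}>0$, and let $\mu$ be a proposal distribution on $\mathbb{R}^d$ such that $\mathsf R_q(\mu\|\pi)\le C_{\mathsf R}q^\gamma$ and $\mathsf R_q(\pi\|\mu)\le C_{\mathsf R}q^\gamma$ for all $1\le q\le C\log(1/\varepsilon)$, where $\gamma>0$ is an absolute constant and $C_{\mathsf R}>0$ satisfies $C_{\mathsf R}\ll(\log(1/\varepsilon))^{-(\gamma+1)}$ (i.e. $C_{\mathsf R}$ is at most a sufficiently small absolute constant times $(\log(1/\varepsilon))^{-(\gamma+1)}$). Assume further that both $\mu$ and $\pi$ are atomless. Then the independent Metropolis–Hastings algorithm (described in the context) returns a sample whose marginal distribution is within total variation distance $\varepsilon$ of $\pi$ after $N=\mathcal O(\log(1/\varepsilon))$ iterations.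
   Context: Rényi divergence of order $q>1$: $\mathsf R_q(\mu\|\nu)=\frac1{q-1}\log\int(\frac{d\mu}{d\nu})^q\,d\nu$, with $\mathsf R_1=\mathsf{KL}$. $\pi$ satisfies the Cheeger isoperimetric inequality with constant $\mathsf{Ch}$ if $\liminf_{\delta\to0^+}\frac{\pi(A^\delta)-\pi(A)}{\delta}\ge\frac1{\mathsf{Ch}}\pi(A)(1-\pi(A))$ for every measurable $A\subseteq\mathbb{R}^d$, where $A^\delta=\{x:\mathrm{dist}(x,A)<\delta\}$. Independent Metropolis–Hastings algorithm with target $\pi$ and proposal $\mu$: draw $x_0\sim\mu$; for $n=0,\dots,N-1$ draw $U\sim\mathrm{Unif}(0,1)$ and $z\sim\mu$ independently, set $a(x_n,z)=\frac12\min\bigl(1,\frac{\pi(z)\mu(x_n)}{\pi(x_n)\mu(z)}\bigr)$, and set $x_{n+1}=z$ if $U\le a(x_n,z)$, otherwise $x_{n+1}=x_n$; return $x_N$. *)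

theory Defs
  imports "HOL-Probability.Probability"
begin

text \<open>Euclidean space R^d, represented as extensional functions on the index set {..<d},
  with its Borel sigma-algebra (product of Borel sigma-algebras) and the Euclidean distance.
  This explicit representation lets the dimension d be quantified inside the statement, so
  that the constants can be required to be independent of d.\<close>

definition Rd :: "nat \<Rightarrow> (nat \<Rightarrow> real) measure" where
  "Rd d = Pi\<^sub>M {..<d} (\<lambda>_. borel)"

definition rdist :: "nat \<Rightarrow> (nat \<Rightarrow> real) \<Rightarrow> (nat \<Rightarrow> real) \<Rightarrow> real" where
  "rdist d x y = sqrt (\<Sum>i<d. (x i - y i)^2)"

definition enlarge :: "nat \<Rightarrow> (nat \<Rightarrow> real) set \<Rightarrow> real \<Rightarrow> (nat \<Rightarrow> real) set" where
  "enlarge d A \<delta> = {x \<in> space (Rd d). \<exists>y\<in>A. rdist d x y < \<delta>}"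

definition cheeger :: "nat \<Rightarrow> (nat \<Rightarrow> real) measure \<Rightarrow> real \<Rightarrow> bool" where
  "cheeger d \<pi> Ch \<longleftrightarrow>
     (\<forall>A\<in>sets (Rd d).
        Liminf (at_right 0) (\<lambda>\<delta>. ereal ((measure \<pi> (enlarge d A \<delta>) - measure \<pi> A) / \<delta>))
          \<ge> ereal (1 / Ch * measure \<pi> A * (1 - measure \<pi> A)))"

definition renyi :: "real \<Rightarrow> 'a measure \<Rightarrow> 'a measure \<Rightarrow> ereal" where
  "renyi q \<mu> \<nu> =
    (let \<rho> = (\<lambda>x. enn2real (RN_deriv \<nu> \<mu> x)) in
     if \<not> absolutely_continuous \<nu> \<mu> then \<infinity>
     else if q = 1 then
       (if integrable \<mu> (\<lambda>x. ln (\<rho> x)) then ereal (\<integral>x. ln (\<rho> x) \<partial>\<mu>) else \<infinity>)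
     else
       (let I = (\<integral>\<^sup>+x. ennreal (\<rho> x powr q) \<partial>\<nu>) in
        if I = \<infinity> then \<infinity> else ereal (ln (enn2real I) / (q - 1))))"

definition atomless :: "'a measure \<Rightarrow> bool" where
  "atomless M \<longleftrightarrow> (\<forall>x\<in>space M. emeasure M {x} = 0)"

text \<open>Acceptance probability a(x,z) = 1/2 min(1, pi(z)mu(x)/(pi(x)mu(z))), written with the
  density ratio w = d pi / d mu (so pi(z)mu(x)/(pi(x)mu(z)) = w(z)/w(x)); if w(x) = 0 the
  ratio is +infinity and the min is 1.\<close>
definition imh_accept :: "(nat \<Rightarrow> real) measure \<Rightarrow> (nat \<Rightarrow> real) measure
    \<Rightarrow> (nat \<Rightarrow> real) \<Rightarrow> (nat \<Rightarrow> real) \<Rightarrow> real" where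
  "imh_accept \<mu> \<pi> x z =
    (let w = (\<lambda>y. enn2real (RN_deriv \<mu> \<pi> y)) in
     if w x = 0 then 1/2 else 1/2 * min 1 (w z / w x))"

text \<open>One IMH step from x: draw z ~ mu, accept (U <= a(x,z), i.e. a Bernoulli(a(x,z)) coin)
  and move to z, otherwise stay at x.\<close>
definition imh_kernel :: "nat \<Rightarrow> (nat \<Rightarrow> real) measure \<Rightarrow> (nat \<Rightarrow> real) measure
    \<Rightarrow> (nat \<Rightarrow> real) \<Rightarrow> (nat \<Rightarrow> real) measure" where
  "imh_kernel d \<mu> \<pi> x =
     \<mu> \<bind> (\<lambda>z. measure_pmf (bernoulli_pmf (imh_accept \<mu> \<pi> x z)) \<bind>
                (\<lambda>b. return (Rd d) (if b then z else x)))"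

primrec imh_law :: "nat \<Rightarrow> (nat \<Rightarrow> real) measure \<Rightarrow> (nat \<Rightarrow> real) measure \<Rightarrow> nat
    \<Rightarrow> (nat \<Rightarrow> real) measure" where
  "imh_law d \<mu> \<pi> 0 = \<mu>"
| "imh_law d \<mu> \<pi> (Suc n) = imh_law d \<mu> \<pi> n \<bind> imh_kernel d \<mu> \<pi>"

definition tv_dist :: "nat \<Rightarrow> (nat \<Rightarrow> real) measure \<Rightarrow> (nat \<Rightarrow> real) measure \<Rightarrow> real" where
  "tv_dist d P Q = (SUP A\<in>sets (Rd d). \<bar>measure P A - measure Q A\<bar>)"

end

theory Submission
  imports Defs
begin

(* A Doeblin-type coupling argument, which needs the Renyi bound only for R_q(pi || mu) at the
   single order q = 4 log(1/eps).

   Let w = d pi / d mu and B = {w > e}. From x outside B a proposal z is accepted with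
   probability at least min(1, w z / e) / 2, so K(x, .) dominates one fixed measure of mass
   beta >= (1 - pi(B)) / (2e). Tested against [0,1]-valued functions, one step therefore
   contracts the distance to pi by the factor 1 - beta, up to an error 2 (nu(B) + pi(B)); pi
   is stationary by detailed balance, w x * a x z = min (w x) (w z) / 2. Every move of the
   chain lands on a fresh proposal from mu, so the law after n steps gives B mass at most
   (n + 1) mu(B). The q-th moment of w under mu is exp ((q - 1) R_q(pi || mu)) <= e, so by
   Markov's inequality mu(B) and pi(B) are of order eps^4; hence beta >= 1/12 and
   N = ceil (24 log(1/eps)) steps suffice. *)

section \<open>Test functions and total variation\<close>

definition unit_tests :: "'a measure \<Rightarrow> ('a \<Rightarrow> real) set" where
  "unit_tests M = {g \<in> borel_measurable M. \<forall>x\<in>space M. 0 \<le> g x \<and> g x \<le> 1}"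

lemma unit_testsI:
  "g \<in> borel_measurable M \<Longrightarrow> (\<And>x. x \<in> space M \<Longrightarrow> 0 \<le> g x \<and> g x \<le> 1) \<Longrightarrow> g \<in> unit_tests M"
  by (simp add: unit_tests_def)

lemma unit_testsD:
  assumes "g \<in> unit_tests M"
  shows "g \<in> borel_measurable M" "x \<in> space M \<Longrightarrow> 0 \<le> g x" "x \<in> space M \<Longrightarrow> g x \<le> 1"
  using assms by (auto simp: unit_tests_def)

lemma unit_tests_mult: "f \<in> unit_tests M \<Longrightarrow> g \<in> unit_tests M \<Longrightarrow> (\<lambda>x. f x * g x) \<in> unit_tests M"
  by (auto simp: unit_tests_def intro: mult_le_one)

lemma indicator_unit_test: "A \<in> sets M \<Longrightarrow> indicator A \<in> unit_tests M"
  by (auto intro!: unit_testsI simp: indicator_def)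

lemma (in prob_space) integrable_unit_test:
  assumes "sets M = sets N" "g \<in> unit_tests N"
  shows "integrable M g"
proof (rule integrable_const_bound[where B=1])
  have "space M = space N"
    using assms(1) by (rule sets_eq_imp_space_eq)
  then show "AE x in M. norm (g x) \<le> 1"
    using assms(2) by (auto simp: unit_tests_def)
  show "g \<in> borel_measurable M"
    using assms(2) measurable_cong_sets[OF assms(1) refl] unfolding unit_tests_def by blast
qed

lemma (in prob_space) integral_unit_test_bounds:
  assumes "sets M = sets N" "g \<in> unit_tests N"
  shows "0 \<le> integral\<^sup>L M g" "integral\<^sup>L M g \<le> 1"
proof -
  have "space M = space N"
    using assms(1) by (rule sets_eq_imp_space_eq)
  then have g01: "x \<in> space M \<Longrightarrow> 0 \<le> g x \<and> g x \<le> 1" for x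
    using assms(2) by (auto simp: unit_tests_def)
  then show "0 \<le> integral\<^sup>L M g"
    by (intro integral_nonneg_AE) auto
  have "integral\<^sup>L M g \<le> integral\<^sup>L M (\<lambda>_. 1)"
    using g01 by (intro integral_mono integrable_unit_test[OF assms]) auto
  then show "integral\<^sup>L M g \<le> 1"
    by (simp add: prob_space)
qed

definition tv_le :: "'a measure \<Rightarrow> 'a measure \<Rightarrow> 'a measure \<Rightarrow> real \<Rightarrow> bool" where
  "tv_le M \<nu> \<nu>' T \<longleftrightarrow> (\<forall>g\<in>unit_tests M. \<bar>integral\<^sup>L \<nu> g - integral\<^sup>L \<nu>' g\<bar> \<le> T)"

lemma tv_le_mono: "tv_le M \<nu> \<nu>' T \<Longrightarrow> T \<le> T' \<Longrightarrow> tv_le M \<nu> \<nu>' T'"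
  by (auto simp: tv_le_def intro: order_trans)

lemma tv_le_1:
  assumes "prob_space \<nu>" "sets \<nu> = sets M" "prob_space \<nu>'" "sets \<nu>' = sets M"
  shows "tv_le M \<nu> \<nu>' 1"
  unfolding tv_le_def
proof
  fix g assume g: "g \<in> unit_tests M"
  show "\<bar>integral\<^sup>L \<nu> g - integral\<^sup>L \<nu>' g\<bar> \<le> 1"
    using prob_space.integral_unit_test_bounds[OF assms(1,2) g]
      prob_space.integral_unit_test_bounds[OF assms(3,4) g]
    by (simp add: abs_le_iff)
qed

lemma tv_dist_le:
  assumes "sets \<nu> = sets (Rd d)" "sets \<nu>' = sets (Rd d)" "tv_le (Rd d) \<nu> \<nu>' T"
  shows "tv_dist d \<nu> \<nu>' \<le> T"
  unfolding tv_dist_def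
proof (rule cSUP_least)
  show "sets (Rd d) \<noteq> {}"
    using sets.empty_sets[of "Rd d"] by (metis empty_iff)
  fix A assume A: "A \<in> sets (Rd d)"
  have "space \<nu> = space (Rd d)" "space \<nu>' = space (Rd d)"
    using assms(1,2) by (metis sets_eq_imp_space_eq)+
  then have "A \<inter> space \<nu> = A" "A \<inter> space \<nu>' = A"
    using sets.sets_into_space[OF A] by auto
  then show "\<bar>measure \<nu> A - measure \<nu>' A\<bar> \<le> T"
    using assms(3) indicator_unit_test[OF A] by (auto simp: tv_le_def)
qed

lemma integral_affine_off_set:
  fixes f h :: "'a \<Rightarrow> real"
  assumes \<rho>: "prob_space \<rho>" "sets \<rho> = sets M"
    and B: "B \<in> sets M" and f: "f \<in> unit_tests M" and h: "h \<in> unit_tests M"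
    and m: "0 \<le> m" "m \<le> 1" and \<beta>: "0 \<le> \<beta>" "\<beta> \<le> 1"
    and off_B: "\<And>x. x \<in> space M - B \<Longrightarrow> f x = m + (1 - \<beta>) * h x"
  shows "\<bar>integral\<^sup>L \<rho> f - (m + (1 - \<beta>) * integral\<^sup>L \<rho> h)\<bar> \<le> 2 * measure \<rho> B"
proof -
  interpret prob_space \<rho> by (fact \<rho>)
  have space: "space \<rho> = space M"
    using \<rho>(2) by (rule sets_eq_imp_space_eq)
  have int_f: "integrable \<rho> f" and int_h: "integrable \<rho> h"
    using integrable_unit_test[OF \<rho>(2)] f h by auto
  have "integral\<^sup>L \<rho> f - (m + (1 - \<beta>) * integral\<^sup>L \<rho> h) = (\<integral>x. f x - (m + (1 - \<beta>) * h x) \<partial>\<rho>)"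
    using int_f int_h by (simp add: prob_space)
  also have "\<bar>\<dots>\<bar> \<le> (\<integral>x. \<bar>f x - (m + (1 - \<beta>) * h x)\<bar> \<partial>\<rho>)"
    using integral_norm_bound[of \<rho> "\<lambda>x. f x - (m + (1 - \<beta>) * h x)"] by simp
  also have "\<dots> \<le> (\<integral>x. 2 * indicator B x \<partial>\<rho>)"
  proof (rule integral_mono)
    show "integrable \<rho> (\<lambda>x. \<bar>f x - (m + (1 - \<beta>) * h x)\<bar>)"
      using int_f int_h by simp
    show "integrable \<rho> (\<lambda>x. 2 * indicator B x :: real)"
      using integrable_unit_test[OF \<rho>(2) indicator_unit_test[OF B]] by simp
    fix x assume x: "x \<in> space \<rho>"
    then have "0 \<le> f x" "f x \<le> 1" "0 \<le> h x" "h x \<le> 1"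
      using f h space by (auto dest: unit_testsD)
    then have "0 \<le> (1 - \<beta>) * h x" "(1 - \<beta>) * h x \<le> 1"
      using \<beta> mult_mono[of "1 - \<beta>" 1 "h x" 1] by auto
    then show "\<bar>f x - (m + (1 - \<beta>) * h x)\<bar> \<le> 2 * indicator B x"
      using off_B[of x] x space m \<open>0 \<le> f x\<close> \<open>f x \<le> 1\<close> by (cases "x \<in> B") auto
  qed
  also have "\<dots> = 2 * measure \<rho> B"
    using B \<rho>(2) by simp
  finally show ?thesis .
qed

lemma doeblin_contraction:
  fixes f h :: "'a \<Rightarrow> real"
  assumes \<nu>: "prob_space \<nu>" "sets \<nu> = sets M" and \<pi>: "prob_space \<pi>" "sets \<pi> = sets M"
    and B: "B \<in> sets M" and f: "f \<in> unit_tests M" and h: "h \<in> unit_tests M"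
    and m: "0 \<le> m" "m \<le> 1" and \<beta>: "0 \<le> \<beta>" "\<beta> \<le> 1"
    and off_B: "\<And>x. x \<in> space M - B \<Longrightarrow> f x = m + (1 - \<beta>) * h x"
    and T: "\<bar>integral\<^sup>L \<nu> h - integral\<^sup>L \<pi> h\<bar> \<le> T"
  shows "\<bar>integral\<^sup>L \<nu> f - integral\<^sup>L \<pi> f\<bar> \<le> (1 - \<beta>) * T + 2 * (measure \<nu> B + measure \<pi> B)"
proof -
  have "\<bar>(1 - \<beta>) * integral\<^sup>L \<nu> h - (1 - \<beta>) * integral\<^sup>L \<pi> h\<bar> \<le> (1 - \<beta>) * T"
    using mult_left_mono[OF T, of "1 - \<beta>"] \<beta> by (simp add: abs_mult flip: right_diff_distrib)
  then show ?thesis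
    using integral_affine_off_set[OF \<nu> B f h m \<beta> off_B] integral_affine_off_set[OF \<pi> B f h m \<beta> off_B]
    by (simp add: abs_le_iff)
qed

section \<open>The independent Metropolis-Hastings kernel\<close>

definition bernoulli_select :: "'a measure \<Rightarrow> real \<Rightarrow> 'a \<Rightarrow> 'a \<Rightarrow> 'a measure" where
  "bernoulli_select N p z x = measure_pmf (bernoulli_pmf p) \<bind> (\<lambda>b. return N (if b then z else x))"

context
  fixes N :: "'a measure" and z x :: 'a
  assumes z: "z \<in> space N" and x: "x \<in> space N"
begin

lemma measurable_return_if:
  "(\<lambda>b. return N (if b then z else x)) \<in> measure_pmf P \<rightarrow>\<^sub>M subprob_algebra N"
  using z x by (auto simp: space_subprob_algebra subprob_space_return)

lemma sets_bernoulli_select: "sets (bernoulli_select N p z x) = sets N"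
  unfolding bernoulli_select_def by (rule sets_bind) (use z x in auto)

lemma prob_space_bernoulli_select: "prob_space (bernoulli_select N p z x)"
  unfolding bernoulli_select_def
  by (rule prob_space.prob_space_bind[OF prob_space_measure_pmf _ measurable_return_if])
     (use z x in \<open>auto intro!: prob_space_return\<close>)

lemma emeasure_bernoulli_select:
  assumes "0 \<le> p" "p \<le> 1" "A \<in> sets N"
  shows "emeasure (bernoulli_select N p z x) A = ennreal p * indicator A z + ennreal (1 - p) * indicator A x"
  unfolding bernoulli_select_def
  using assms by (subst emeasure_bind[OF _ measurable_return_if]) (auto simp: mult.commute)

lemma integral_bernoulli_select:
  fixes g :: "'a \<Rightarrow> real"
  assumes "0 \<le> p" "p \<le> 1" "g \<in> unit_tests N"
  shows "integral\<^sup>L (bernoulli_select N p z x) g = p * g z + (1 - p) * g x"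
proof -
  have "integral\<^sup>L (bernoulli_select N p z x) g
      = (\<integral>b. integral\<^sup>L (return N (if b then z else x)) g \<partial>measure_pmf (bernoulli_pmf p))"
    unfolding bernoulli_select_def
    using assms(3) z x
    by (intro integral_bind[OF _ _ measurable_return_if, where B=1 and B'=1])
       (auto simp: unit_tests_def prob_space_return prob_space.emeasure_space_1 prob_space_measure_pmf
             intro: prob_space_imp_subprob_space)
  also have "\<dots> = p * g z + (1 - p) * g x"
    using assms z x by (simp add: integral_return unit_tests_def mult.commute)
  finally show ?thesis .
qed

end

locale imh =
  fixes d :: nat and \<mu> \<pi> :: "(nat \<Rightarrow> real) measure"
  assumes prob_space_\<mu>: "prob_space \<mu>" and sets_\<mu> [measurable_cong]: "sets \<mu> = sets (Rd d)"
    and prob_space_\<pi>: "prob_space \<pi>" and sets_\<pi> [measurable_cong]: "sets \<pi> = sets (Rd d)"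
    and absolutely_continuous: "absolutely_continuous \<mu> \<pi>"
begin

sublocale \<mu>: prob_space \<mu>
  by (fact prob_space_\<mu>)

sublocale \<pi>: prob_space \<pi>
  by (fact prob_space_\<pi>)

abbreviation w :: "(nat \<Rightarrow> real) \<Rightarrow> real" where
  "w x \<equiv> enn2real (RN_deriv \<mu> \<pi> x)"

abbreviation a :: "(nat \<Rightarrow> real) \<Rightarrow> (nat \<Rightarrow> real) \<Rightarrow> real" where
  "a \<equiv> imh_accept \<mu> \<pi>"

abbreviation K :: "(nat \<Rightarrow> real) \<Rightarrow> (nat \<Rightarrow> real) measure" where
  "K \<equiv> imh_kernel d \<mu> \<pi>"

lemma space_\<mu>: "space \<mu> = space (Rd d)"
  using sets_\<mu> by (rule sets_eq_imp_space_eq)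

lemma measurable_w [measurable]: "w \<in> borel_measurable (Rd d)"
  by measurable

lemma accept_eq: "a x z = (if w x = 0 then 1/2 else 1/2 * min 1 (w z / w x))"
  by (simp add: imh_accept_def)

lemma accept_bounds: "0 \<le> a x z" "a x z \<le> 1/2"
  by (auto simp: accept_eq)

lemma accept_le_1: "a x z \<le> 1"
  using accept_bounds(2) by (rule order_trans) simp

lemma w_mult_accept: "w x * a x z = min (w x) (w z) / 2"
proof (cases "w x = 0")
  case False
  then have "w x * min 1 (w z / w x) = min (w x) (w z)"
    by (simp add: min_mult_distrib_left)
  then show ?thesis
    using False by (simp add: accept_eq)
qed (simp add: accept_eq)

lemma measurable_accept [measurable]: "(\<lambda>(x, z). a x z) \<in> borel_measurable (Rd d \<Otimes>\<^sub>M Rd d)"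
  unfolding accept_eq split_beta' by measurable

lemma measurable_accept_right [measurable]: "(\<lambda>z. a x z) \<in> borel_measurable (Rd d)"
  unfolding accept_eq by measurable

lemma imh_kernel_eq: "K x = \<mu> \<bind> (\<lambda>z. bernoulli_select (Rd d) (a x z) z x)"
  by (simp add: imh_kernel_def bernoulli_select_def)

lemma measurable_bernoulli_select_accept:
  "(\<lambda>(x, z). bernoulli_select (Rd d) (a x z) z x) \<in> Rd d \<Otimes>\<^sub>M Rd d \<rightarrow>\<^sub>M subprob_algebra (Rd d)"
proof (rule measurable_subprob_algebra)
  fix p assume "p \<in> space (Rd d \<Otimes>\<^sub>M Rd d)"
  then have p: "fst p \<in> space (Rd d)" "snd p \<in> space (Rd d)"
    by (auto simp: space_pair_measure)
  show "subprob_space (case p of (x, z) \<Rightarrow> bernoulli_select (Rd d) (a x z) z x)"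
    using prob_space_bernoulli_select[OF p(2,1)] by (simp add: split_beta' prob_space_imp_subprob_space)
  show "sets (case p of (x, z) \<Rightarrow> bernoulli_select (Rd d) (a x z) z x) = sets (Rd d)"
    using sets_bernoulli_select[OF p(2,1)] by (simp add: split_beta')
next
  fix A assume A [measurable]: "A \<in> sets (Rd d)"
  have "(\<lambda>p. ennreal (a (fst p) (snd p)) * indicator A (snd p) + ennreal (1 - a (fst p) (snd p)) * indicator A (fst p))
      \<in> borel_measurable (Rd d \<Otimes>\<^sub>M Rd d)"
    by measurable
  then show "(\<lambda>p. emeasure (case p of (x, z) \<Rightarrow> bernoulli_select (Rd d) (a x z) z x) A)
      \<in> borel_measurable (Rd d \<Otimes>\<^sub>M Rd d)"
  proof (rule measurable_cong[THEN iffD1, rotated])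
    fix p assume "p \<in> space (Rd d \<Otimes>\<^sub>M Rd d)"
    then have p: "fst p \<in> space (Rd d)" "snd p \<in> space (Rd d)"
      by (auto simp: space_pair_measure)
    show "ennreal (a (fst p) (snd p)) * indicator A (snd p) + ennreal (1 - a (fst p) (snd p)) * indicator A (fst p)
        = emeasure (case p of (x, z) \<Rightarrow> bernoulli_select (Rd d) (a x z) z x) A"
      using emeasure_bernoulli_select[OF p(2,1) accept_bounds(1) accept_le_1 A] by (simp add: split_beta')
  qed
qed

lemma measurable_imh_kernel [measurable]: "K \<in> Rd d \<rightarrow>\<^sub>M subprob_algebra (Rd d)"
  unfolding imh_kernel_eq[abs_def]
  by (rule measurable_bind'[OF measurable_const measurable_bernoulli_select_accept])
     (simp add: space_subprob_algebra sets_\<mu> \<mu>.subprob_space_axioms)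

lemma sets_imh_kernel: "x \<in> space (Rd d) \<Longrightarrow> sets (K x) = sets (Rd d)"
  using measurable_space[OF measurable_imh_kernel] by (simp add: space_subprob_algebra)

lemma prob_space_imh_kernel: "x \<in> space (Rd d) \<Longrightarrow> prob_space (K x)"
  unfolding imh_kernel_eq
  using measurable_Pair2[OF measurable_bernoulli_select_accept]
  by (intro \<mu>.prob_space_bind[where S="Rd d"])
     (auto simp: space_\<mu> prob_space_bernoulli_select measurable_cong_sets[OF sets_\<mu> refl])

definition imh_op :: "((nat \<Rightarrow> real) \<Rightarrow> real) \<Rightarrow> (nat \<Rightarrow> real) \<Rightarrow> real" where
  "imh_op g x = (\<integral>z. a x z * g z \<partial>\<mu>) + (1 - (\<integral>z. a x z \<partial>\<mu>)) * g x"

lemma integrable_accept: "integrable \<mu> (a x)"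
  using accept_bounds by (intro \<mu>.integrable_const_bound[where B="1/2"]) (auto simp: eta_expand)

lemma integrable_accept_mult:
  assumes "g \<in> unit_tests (Rd d)"
  shows "integrable \<mu> (\<lambda>z. a x z * g z)"
proof (rule \<mu>.integrable_const_bound[where B=1])
  show "AE z in \<mu>. norm (a x z * g z) \<le> 1"
  proof (rule AE_I2)
    fix z assume "z \<in> space \<mu>"
    then have "0 \<le> g z" "g z \<le> 1"
      using assms by (auto simp: space_\<mu> dest: unit_testsD)
    then show "norm (a x z * g z) \<le> 1"
      using accept_bounds[of x z] by (simp add: abs_mult mult_le_one)
  qed
  have [measurable]: "g \<in> borel_measurable (Rd d)"
    using assms by (rule unit_testsD)
  show "(\<lambda>z. a x z * g z) \<in> borel_measurable \<mu>"
    by measurable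
qed

lemma integral_imh_kernel:
  assumes x: "x \<in> space (Rd d)" and g: "g \<in> unit_tests (Rd d)"
  shows "integral\<^sup>L (K x) g = imh_op g x"
proof -
  have select: "(\<lambda>z. bernoulli_select (Rd d) (a x z) z x) \<in> \<mu> \<rightarrow>\<^sub>M subprob_algebra (Rd d)"
    using measurable_Pair2[OF measurable_bernoulli_select_accept x] measurable_cong_sets[OF sets_\<mu> refl]
    by simp
  have "integral\<^sup>L (K x) g = (\<integral>z. integral\<^sup>L (bernoulli_select (Rd d) (a x z) z x) g \<partial>\<mu>)"
    unfolding imh_kernel_eq
    using g x
    by (intro integral_bind[OF _ _ select, where B=1 and B'=1])
       (auto simp: unit_tests_def space_\<mu> prob_space_bernoulli_select prob_space.emeasure_space_1)
  also have "\<dots> = (\<integral>z. a x z * g z + (1 - a x z) * g x \<partial>\<mu>)"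
    using x g accept_bounds(1) accept_le_1
    by (intro Bochner_Integration.integral_cong refl integral_bernoulli_select) (auto simp: space_\<mu>)
  also have "\<dots> = imh_op g x"
    using integrable_accept_mult[OF g] integrable_accept by (simp add: imh_op_def \<mu>.prob_space)
  finally show ?thesis .
qed

lemma imh_op_unit_test:
  assumes g: "g \<in> unit_tests (Rd d)"
  shows "imh_op g \<in> unit_tests (Rd d)"
proof (rule unit_testsI)
  have [measurable]: "g \<in> borel_measurable (Rd d)"
    using g by (rule unit_testsD)
  have "(\<lambda>x. integral\<^sup>L (K x) g) \<in> borel_measurable (Rd d)"
    by measurable
  then show "imh_op g \<in> borel_measurable (Rd d)"
    by (rule measurable_cong[THEN iffD1, rotated]) (simp add: integral_imh_kernel g)
  fix x assume x: "x \<in> space (Rd d)"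
  show "0 \<le> imh_op g x \<and> imh_op g x \<le> 1"
    using prob_space.integral_unit_test_bounds[OF prob_space_imh_kernel[OF x] sets_imh_kernel[OF x] g]
    by (simp add: integral_imh_kernel[OF x g])
qed

context
  fixes \<nu> assumes \<nu>: "prob_space \<nu>" "sets \<nu> = sets (Rd d)"
begin

lemma measurable_imh_kernel': "K \<in> \<nu> \<rightarrow>\<^sub>M subprob_algebra (Rd d)"
  using measurable_imh_kernel measurable_cong_sets[OF \<nu>(2) refl] by blast

lemma prob_space_bind_imh_kernel: "prob_space (\<nu> \<bind> K)"
  using \<nu> prob_space_imh_kernel
  by (intro prob_space.prob_space_bind[OF \<nu>(1) _ measurable_imh_kernel'])
     (auto simp: sets_eq_imp_space_eq[OF \<nu>(2)])

lemma sets_bind_imh_kernel: "sets (\<nu> \<bind> K) = sets (Rd d)"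
  using sets_imh_kernel prob_space.not_empty[OF \<nu>(1)]
  by (intro sets_bind) (auto simp: sets_eq_imp_space_eq[OF \<nu>(2)])

lemma integral_bind_imh_kernel:
  assumes g: "g \<in> unit_tests (Rd d)"
  shows "integral\<^sup>L (\<nu> \<bind> K) g = integral\<^sup>L \<nu> (imh_op g)"
proof -
  have "integral\<^sup>L (\<nu> \<bind> K) g = (\<integral>x. integral\<^sup>L (K x) g \<partial>\<nu>)"
    using g prob_space_imh_kernel
    by (intro integral_bind[OF _ _ measurable_imh_kernel', where B=1 and B'=1])
       (auto simp: unit_tests_def sets_eq_imp_space_eq[OF \<nu>(2)] prob_space.emeasure_space_1
         prob_space_imp_subprob_space \<nu>(1) prob_space.finite_measure)
  also have "\<dots> = integral\<^sup>L \<nu> (imh_op g)"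
    using g by (intro Bochner_Integration.integral_cong refl)
      (simp add: sets_eq_imp_space_eq[OF \<nu>(2)] integral_imh_kernel)
  finally show ?thesis .
qed

end

lemma \<pi>_eq_density: "\<pi> = density \<mu> (\<lambda>x. ennreal (w x))"
proof -
  have "AE x in \<mu>. RN_deriv \<mu> \<pi> x \<noteq> \<infinity>"
    using prob_space_\<pi> sets_\<pi> sets_\<mu>
    by (intro \<mu>.RN_deriv_finite absolutely_continuous) (auto simp: prob_space_def finite_measure_def)
  then have "density \<mu> (RN_deriv \<mu> \<pi>) = density \<mu> (\<lambda>x. ennreal (w x))"
    by (intro density_cong) (auto simp: less_top)
  then show ?thesis
    using \<mu>.density_RN_deriv[OF absolutely_continuous] sets_\<pi> sets_\<mu> by simp
qed

lemma integral_\<pi>: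
  fixes f :: "(nat \<Rightarrow> real) \<Rightarrow> real"
  assumes [measurable]: "f \<in> borel_measurable (Rd d)"
  shows "integral\<^sup>L \<pi> f = (\<integral>x. w x * f x \<partial>\<mu>)"
  by (subst \<pi>_eq_density) (simp add: integral_density)

lemma integrable_w_mult:
  assumes f: "integrable \<pi> f"
  shows "integrable \<mu> (\<lambda>x. w x * f x)"
proof -
  have [measurable]: "f \<in> borel_measurable (Rd d)"
    using borel_measurable_integrable[OF f] measurable_cong_sets[OF sets_\<pi> refl] by blast
  show ?thesis
    using f by (subst (asm) \<pi>_eq_density) (simp add: integrable_density)
qed

lemma integrable_w: "integrable \<mu> w"
  using integrable_w_mult[OF \<pi>.integrable_const[of 1]] by simp

lemma integrable_min_w_mult:
  assumes g: "g \<in> unit_tests (Rd d)"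
  shows "integrable (\<mu> \<Otimes>\<^sub>M \<mu>) (\<lambda>(x, z). min (w x) (w z) / 2 * g z)"
proof (rule Bochner_Integration.integrable_bound)
  have [measurable]: "g \<in> borel_measurable (Rd d)"
    using g by (rule unit_testsD)
  have "integrable (distr (\<mu> \<Otimes>\<^sub>M \<mu>) \<mu> fst) w"
    using \<mu>.distr_pair_fst[of \<mu>] integrable_w by simp
  then show "integrable (\<mu> \<Otimes>\<^sub>M \<mu>) (\<lambda>p. w (fst p))"
    by (subst (asm) integrable_distr_eq) auto
  show "(\<lambda>(x, z). min (w x) (w z) / 2 * g z) \<in> borel_measurable (\<mu> \<Otimes>\<^sub>M \<mu>)"
    unfolding split_beta' by measurable
  show "AE p in \<mu> \<Otimes>\<^sub>M \<mu>. norm ((\<lambda>(x, z). min (w x) (w z) / 2 * g z) p) \<le> norm (w (fst p))"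
  proof (rule AE_I2)
    fix p assume "p \<in> space (\<mu> \<Otimes>\<^sub>M \<mu>)"
    then have "0 \<le> g (snd p)" "g (snd p) \<le> 1"
      using g by (auto simp: space_pair_measure space_\<mu> dest: unit_testsD)
    moreover have "min (w (fst p)) (w (snd p)) \<le> w (fst p)"
      by simp
    ultimately have "g (snd p) * min (w (fst p)) (w (snd p)) \<le> 1 * w (fst p)"
      by (intro mult_mono) auto
    then show "norm ((\<lambda>(x, z). min (w x) (w z) / 2 * g z) p) \<le> norm (w (fst p))"
      using \<open>0 \<le> g (snd p)\<close> by (simp add: split_beta' abs_mult mult.commute)
        (use enn2real_nonneg[of "RN_deriv \<mu> \<pi> (fst p)"] in linarith)
  qed
qed

text \<open>Stationarity of \<pi> from detailed balance: by \<open>w_mult_accept\<close> the flux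
  \<open>w x * a x z\<close> is symmetric in \<open>x\<close> and \<open>z\<close>, so the two double integrals below agree by Fubini.\<close>

lemma integral_imh_op_\<pi>:
  assumes g: "g \<in> unit_tests (Rd d)"
  shows "integral\<^sup>L \<pi> (imh_op g) = integral\<^sup>L \<pi> g"
proof -
  interpret \<mu>\<mu>: pair_sigma_finite \<mu> \<mu> ..
  have [measurable]: "g \<in> borel_measurable (Rd d)" "imh_op g \<in> borel_measurable (Rd d)"
    using g imh_op_unit_test[OF g] by (auto dest: unit_testsD)
  define F where "F x z = min (w x) (w z) / 2 * g z" for x z
  have F: "integrable (\<mu> \<Otimes>\<^sub>M \<mu>) (\<lambda>(x, z). F x z)"
    unfolding F_def using g by (rule integrable_min_w_mult)
  have int_wg: "integrable \<mu> (\<lambda>x. w x * g x)"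
    using \<pi>.integrable_unit_test[OF sets_\<pi> g] by (rule integrable_w_mult)
  have balance: "w x * imh_op g x = (\<integral>z. F x z \<partial>\<mu>) + w x * g x - (\<integral>z. F z x \<partial>\<mu>)" for x
  proof -
    have "w x * (a x z * g z) = F x z" for z
      by (simp add: F_def flip: w_mult_accept)
    then have "w x * (\<integral>z. a x z * g z \<partial>\<mu>) = (\<integral>z. F x z \<partial>\<mu>)"
      by (simp flip: integral_mult_right_zero)
    moreover have "w x * a x z * g x = F z x" for z
      by (simp add: F_def w_mult_accept min.commute)
    then have "w x * (\<integral>z. a x z \<partial>\<mu>) * g x = (\<integral>z. F z x \<partial>\<mu>)"
      by (simp flip: integral_mult_right_zero integral_mult_left_zero)
    ultimately show ?thesis
      by (simp add: imh_op_def algebra_simps)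
  qed
  have "integral\<^sup>L \<pi> (imh_op g) = (\<integral>x. w x * imh_op g x \<partial>\<mu>)"
    by (rule integral_\<pi>) measurable
  also have "\<dots> = (\<integral>x. \<integral>z. F x z \<partial>\<mu> \<partial>\<mu>) + (\<integral>x. w x * g x \<partial>\<mu>) - (\<integral>x. \<integral>z. F z x \<partial>\<mu> \<partial>\<mu>)"
    unfolding balance using \<mu>\<mu>.integrable_fst[OF F] \<mu>\<mu>.integrable_snd[OF F] int_wg by simp
  also have "\<dots> = (\<integral>x. w x * g x \<partial>\<mu>)"
    using \<mu>\<mu>.Fubini_integral[OF F] by simp
  also have "\<dots> = integral\<^sup>L \<pi> g"
    by (rule integral_\<pi>[symmetric]) measurable
  finally show ?thesis .
qed

lemma imh_op_indicator_le:
  assumes A: "A \<in> sets (Rd d)"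
  shows "imh_op (indicator A) x \<le> measure \<mu> A + indicator A x"
proof -
  have "(\<integral>z. a x z * indicator A z \<partial>\<mu>) \<le> (\<integral>z. indicator A z \<partial>\<mu>)"
  proof (rule integral_mono)
    show "integrable \<mu> (\<lambda>z. a x z * indicator A z)"
      using indicator_unit_test[OF A] by (rule integrable_accept_mult)
    show "integrable \<mu> (indicator A :: _ \<Rightarrow> real)"
      using sets_\<mu> indicator_unit_test[OF A] by (rule \<mu>.integrable_unit_test)
    show "a x z * indicator A z \<le> indicator A z" for z
      using accept_le_1[of x z] by (simp add: indicator_def)
  qed
  also have "\<dots> = measure \<mu> A"
    using A by simp
  finally have "(\<integral>z. a x z * indicator A z \<partial>\<mu>) \<le> measure \<mu> A" .
  moreover have "0 \<le> (\<integral>z. a x z \<partial>\<mu>) * indicator A x"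
    using accept_bounds by (simp add: integral_nonneg_AE)
  ultimately show ?thesis
    unfolding imh_op_def by (simp add: left_diff_distrib)
qed

lemma measure_bind_imh_kernel_le:
  assumes \<nu>: "prob_space \<nu>" "sets \<nu> = sets (Rd d)" and A: "A \<in> sets (Rd d)"
  shows "measure (\<nu> \<bind> K) A \<le> measure \<nu> A + measure \<mu> A"
proof -
  have "measure (\<nu> \<bind> K) A = integral\<^sup>L (\<nu> \<bind> K) (indicator A)"
    using A by (simp add: sets_bind_imh_kernel[OF \<nu>])
  also have "\<dots> = integral\<^sup>L \<nu> (imh_op (indicator A))"
    using \<nu> indicator_unit_test[OF A] by (rule integral_bind_imh_kernel)
  also have "\<dots> \<le> (\<integral>x. measure \<mu> A + indicator A x \<partial>\<nu>)"
  proof (rule integral_mono)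
    show "integrable \<nu> (imh_op (indicator A))"
      using \<nu> imh_op_unit_test[OF indicator_unit_test[OF A]] by (rule prob_space.integrable_unit_test)
    show "integrable \<nu> (\<lambda>x. measure \<mu> A + indicator A x)"
      using prob_space.integrable_unit_test[OF \<nu> indicator_unit_test[OF A]]
        finite_measure.integrable_const[OF prob_space.finite_measure[OF \<nu>(1)]]
      by (rule Bochner_Integration.integrable_add[rotated])
    show "imh_op (indicator A) x \<le> measure \<mu> A + indicator A x" for x
      using A by (rule imh_op_indicator_le)
  qed
  also have "\<dots> = measure \<nu> A + measure \<mu> A"
    using \<nu> A prob_space.integrable_unit_test[OF \<nu> indicator_unit_test[OF A]]
    by (simp add: prob_space.prob_space finite_measure.integrable_const prob_space.finite_measure)
  finally show ?thesis .
qed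

abbreviation law :: "nat \<Rightarrow> (nat \<Rightarrow> real) measure" where
  "law n \<equiv> imh_law d \<mu> \<pi> n"

lemma prob_space_law: "prob_space (law n)" and sets_law: "sets (law n) = sets (Rd d)"
proof (induction n)
  case (Suc n)
  then show "prob_space (law (Suc n))" "sets (law (Suc n)) = sets (Rd d)"
    by (simp_all add: prob_space_bind_imh_kernel sets_bind_imh_kernel)
qed (simp_all add: prob_space_\<mu> sets_\<mu>)

lemma measure_law_le:
  assumes "A \<in> sets (Rd d)"
  shows "measure (law n) A \<le> (n + 1) * measure \<mu> A"
proof (induction n)
  case (Suc n)
  then show ?case
    using measure_bind_imh_kernel_le[OF prob_space_law sets_law assms, of n] by (simp add: algebra_simps)
qed simp

end

section \<open>Doeblin minorization off the set where the density ratio is large\<close>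

locale imh_doeblin = imh +
  fixes t :: real
  assumes threshold_pos: "0 < t"
begin

definition bad_set :: "(nat \<Rightarrow> real) set" where
  "bad_set = {x \<in> space (Rd d). t < w x}"

definition minorant :: "(nat \<Rightarrow> real) \<Rightarrow> real" where
  "minorant z = min 1 (w z / t) / 2"

definition doeblin_mass :: real where
  "doeblin_mass = (\<integral>z. minorant z \<partial>\<mu>)"

lemma sets_bad_set [measurable]: "bad_set \<in> sets (Rd d)"
  unfolding bad_set_def by measurable

lemma minorant_bounds: "0 \<le> minorant z" "minorant z \<le> 1/2"
  using threshold_pos by (auto simp: minorant_def)

lemma minorant_unit_test: "minorant \<in> unit_tests (Rd d)"
  using minorant_bounds by (intro unit_testsI) (auto simp: minorant_def[abs_def])

lemma minorant_le_accept:
  assumes "w x \<le> t"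
  shows "minorant z \<le> a x z"
proof (cases "w x = 0")
  case False
  then have "0 < w x"
    using enn2real_nonneg[of "RN_deriv \<mu> \<pi> x"] by linarith
  then have "w z / t \<le> w z / w x"
    using assms by (intro divide_left_mono) auto
  then show ?thesis
    using False by (auto simp: accept_eq minorant_def)
qed (use minorant_bounds in \<open>simp add: accept_eq\<close>)

lemma doeblin_mass_bounds: "0 \<le> doeblin_mass" "doeblin_mass \<le> 1/2"
  using \<mu>.integral_unit_test_bounds[OF sets_\<mu> minorant_unit_test]
    integral_mono[OF \<mu>.integrable_unit_test[OF sets_\<mu> minorant_unit_test], of "\<lambda>_. 1/2"]
    minorant_bounds
  by (auto simp: doeblin_mass_def \<mu>.prob_space)

lemma doeblin_mass_ge: "(1 - measure \<pi> bad_set) / (2 * t) \<le> doeblin_mass"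
proof -
  have int_B: "integrable \<pi> (indicator bad_set :: _ \<Rightarrow> real)"
    using sets_\<pi> indicator_unit_test[OF sets_bad_set] by (rule \<pi>.integrable_unit_test)
  then have int_\<pi>: "integrable \<pi> (\<lambda>x. 1 - indicator bad_set x :: real)"
    by simp
  have "(1 - measure \<pi> bad_set) / (2 * t) = integral\<^sup>L \<pi> (\<lambda>x. (1 - indicator bad_set x) / (2 * t))"
    using int_B by (simp add: \<pi>.prob_space)
  also have "\<dots> = (\<integral>x. w x * ((1 - indicator bad_set x) / (2 * t)) \<partial>\<mu>)"
    by (rule integral_\<pi>) measurable
  also have "\<dots> \<le> doeblin_mass"
    unfolding doeblin_mass_def
  proof (rule integral_mono)
    show "integrable \<mu> minorant"
      using sets_\<mu> minorant_unit_test by (rule \<mu>.integrable_unit_test)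
    show "integrable \<mu> (\<lambda>x. w x * ((1 - indicator bad_set x) / (2 * t)))"
      using int_\<pi> by (intro integrable_w_mult integrable_divide_zero)
    fix x assume "x \<in> space \<mu>"
    then show "w x * ((1 - indicator bad_set x) / (2 * t)) \<le> minorant x"
      using threshold_pos minorant_bounds[of x]
      by (cases "x \<in> bad_set") (auto simp: bad_set_def minorant_def space_\<mu>)
  qed
  finally show ?thesis .
qed

lemma imh_op_minorization:
  assumes g: "g \<in> unit_tests (Rd d)" and x: "x \<in> space (Rd d) - bad_set"
  shows "0 \<le> imh_op g x - (\<integral>z. minorant z * g z \<partial>\<mu>)"
    and "imh_op g x - (\<integral>z. minorant z * g z \<partial>\<mu>) \<le> 1 - doeblin_mass"
proof -
  have minorant_le: "minorant z \<le> a x z" for z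
    using x by (intro minorant_le_accept) (auto simp: bad_set_def)
  have g01: "0 \<le> g z" "g z \<le> 1" if "z \<in> space \<mu>" for z
    using g that by (auto simp: space_\<mu> dest: unit_testsD)
  have int_mg: "integrable \<mu> (\<lambda>z. minorant z * g z)"
    using sets_\<mu> unit_tests_mult[OF minorant_unit_test g] by (rule \<mu>.integrable_unit_test)
  have int_m: "integrable \<mu> minorant"
    using sets_\<mu> minorant_unit_test by (rule \<mu>.integrable_unit_test)
  define A where "A = (\<integral>z. a x z \<partial>\<mu>)"
  define D where "D = (\<integral>z. (a x z - minorant z) * g z \<partial>\<mu>)"
  have decomp: "imh_op g x - (\<integral>z. minorant z * g z \<partial>\<mu>) = D + (1 - A) * g x"
    using integrable_accept_mult[OF g] int_mg
    by (simp add: imh_op_def D_def A_def left_diff_distrib)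
  have "0 \<le> D"
    unfolding D_def using minorant_le g01 by (intro integral_nonneg_AE AE_I2) simp
  moreover have "D \<le> A - doeblin_mass"
  proof -
    have "D \<le> (\<integral>z. a x z - minorant z \<partial>\<mu>)"
      unfolding D_def
    proof (rule integral_mono)
      show "integrable \<mu> (\<lambda>z. (a x z - minorant z) * g z)"
        using integrable_accept_mult[OF g] int_mg by (simp add: left_diff_distrib)
      show "integrable \<mu> (\<lambda>z. a x z - minorant z)"
        using integrable_accept int_m by simp
      show "(a x z - minorant z) * g z \<le> a x z - minorant z" if "z \<in> space \<mu>" for z
        using minorant_le[of z] g01[OF that] by (simp add: mult_left_le)
    qed
    then show ?thesis
      using integrable_accept int_m by (simp add: A_def doeblin_mass_def)
  qed
  moreover have "0 \<le> A" "A \<le> 1"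
    using integral_mono[OF integrable_accept, of "\<lambda>_. 1" x] accept_bounds(1) accept_le_1
    by (auto simp: A_def \<mu>.prob_space integral_nonneg_AE)
  moreover have "0 \<le> g x" "g x \<le> 1"
    using g01 x by (auto simp: space_\<mu>)
  ultimately show "0 \<le> imh_op g x - (\<integral>z. minorant z * g z \<partial>\<mu>)"
    and "imh_op g x - (\<integral>z. minorant z * g z \<partial>\<mu>) \<le> 1 - doeblin_mass"
    unfolding decomp using mult_left_le[of "g x" "1 - A"] by auto
qed

lemma tv_le_bind_imh_kernel:
  assumes \<nu>: "prob_space \<nu>" "sets \<nu> = sets (Rd d)" and T: "tv_le (Rd d) \<nu> \<pi> T"
  shows "tv_le (Rd d) (\<nu> \<bind> K) \<pi>
    ((1 - doeblin_mass) * T + 2 * (measure \<nu> bad_set + measure \<pi> bad_set))"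
  unfolding tv_le_def
proof
  fix g assume g: "g \<in> unit_tests (Rd d)"
  define m where "m = (\<integral>z. minorant z * g z \<partial>\<mu>)"
  define h where "h x = (if x \<in> bad_set then 0 else (imh_op g x - m) / (1 - doeblin_mass))" for x
  have \<beta>: "0 \<le> doeblin_mass" "doeblin_mass \<le> 1" "doeblin_mass < 1"
    using doeblin_mass_bounds by auto
  have m: "0 \<le> m" "m \<le> 1"
    using \<mu>.integral_unit_test_bounds[OF sets_\<mu> unit_tests_mult[OF minorant_unit_test g]]
    by (simp_all add: m_def)
  have [measurable]: "imh_op g \<in> borel_measurable (Rd d)"
    using imh_op_unit_test[OF g] by (rule unit_testsD)
  have h: "h \<in> unit_tests (Rd d)"
  proof (rule unit_testsI)
    show "h \<in> borel_measurable (Rd d)"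
      unfolding h_def[abs_def] by measurable
    fix x assume "x \<in> space (Rd d)"
    then show "0 \<le> h x \<and> h x \<le> 1"
      using imh_op_minorization[OF g, of x] \<beta> by (auto simp: h_def m_def)
  qed
  have off_bad: "imh_op g x = m + (1 - doeblin_mass) * h x" if "x \<in> space (Rd d) - bad_set" for x
    using that \<beta> by (simp add: h_def)
  have "\<bar>integral\<^sup>L \<nu> (imh_op g) - integral\<^sup>L \<pi> (imh_op g)\<bar>
      \<le> (1 - doeblin_mass) * T + 2 * (measure \<nu> bad_set + measure \<pi> bad_set)"
    using T h unfolding tv_le_def
    by (intro doeblin_contraction[OF \<nu> prob_space_\<pi> sets_\<pi> sets_bad_set imh_op_unit_test[OF g] h m
          \<beta>(1,2) off_bad]) auto
  then show "\<bar>integral\<^sup>L (\<nu> \<bind> K) g - integral\<^sup>L \<pi> g\<bar>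
      \<le> (1 - doeblin_mass) * T + 2 * (measure \<nu> bad_set + measure \<pi> bad_set)"
    by (simp add: integral_bind_imh_kernel[OF \<nu> g] integral_imh_op_\<pi>[OF g])
qed

lemma tv_le_law:
  "tv_le (Rd d) (law n) \<pi>
    ((1 - doeblin_mass) ^ n + (real n + 1)^2 * (2 * (measure \<mu> bad_set + measure \<pi> bad_set)))"
proof (induction n)
  case 0
  show ?case
    using tv_le_1[OF prob_space_\<mu> sets_\<mu> prob_space_\<pi> sets_\<pi>] by (simp add: tv_le_mono)
next
  case (Suc n)
  define E where "E = 2 * (measure \<mu> bad_set + measure \<pi> bad_set)"
  have "(real n + 1) * E
      = 2 * ((real n + 1) * measure \<mu> bad_set) + 2 * measure \<pi> bad_set + 2 * (real n * measure \<pi> bad_set)"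
    by (simp add: E_def algebra_simps)
  moreover have "0 \<le> real n * measure \<pi> bad_set"
    by simp
  ultimately have "2 * (measure (law n) bad_set + measure \<pi> bad_set) \<le> (real n + 1) * E"
    using measure_law_le[OF sets_bad_set, of n] by (smt (verit))
  moreover have "(1 - doeblin_mass) * ((real n + 1)^2 * E) \<le> (real n + 1)^2 * E"
    using doeblin_mass_bounds by (intro mult_left_le_one_le) (auto simp: E_def)
  moreover have "((real n + 1)^2 + (real n + 1)) * E \<le> (real (Suc n) + 1)^2 * E"
    by (intro mult_right_mono) (auto simp: E_def power2_eq_square algebra_simps)
  moreover have "(1 - doeblin_mass) * ((1 - doeblin_mass) ^ n + (real n + 1)^2 * E)
      = (1 - doeblin_mass) ^ Suc n + (1 - doeblin_mass) * ((real n + 1)^2 * E)"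
    by (simp add: distrib_left)
  ultimately have "(1 - doeblin_mass) * ((1 - doeblin_mass) ^ n + (real n + 1)^2 * E)
      + 2 * (measure (law n) bad_set + measure \<pi> bad_set)
      \<le> (1 - doeblin_mass) ^ Suc n + (real (Suc n) + 1)^2 * E"
    by (simp only: distrib_right)
  then show ?case
    using tv_le_bind_imh_kernel[OF prob_space_law sets_law Suc.IH[folded E_def]]
    by (auto simp: E_def intro: tv_le_mono)
qed

lemma tv_dist_law_le:
  "tv_dist d (law n) \<pi>
    \<le> (1 - doeblin_mass) ^ n + (real n + 1)^2 * (2 * (measure \<mu> bad_set + measure \<pi> bad_set))"
  using sets_law sets_\<pi> tv_le_law by (rule tv_dist_le)

lemma measure_\<mu>_bad_set_le:
  assumes q: "0 \<le> q" and I: "(\<integral>\<^sup>+x. ennreal (w x powr q) \<partial>\<mu>) \<le> ennreal I" "0 \<le> I"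
  shows "t powr q * measure \<mu> bad_set \<le> I"
proof -
  have "ennreal (t powr q * measure \<mu> bad_set) = (\<integral>\<^sup>+x. ennreal (t powr q) * indicator bad_set x \<partial>\<mu>)"
    by (simp add: nn_integral_cmult_indicator \<mu>.emeasure_eq_measure ennreal_mult)
  also have "\<dots> \<le> (\<integral>\<^sup>+x. ennreal (w x powr q) \<partial>\<mu>)"
  proof (rule nn_integral_mono)
    fix x
    have "t powr q \<le> w x powr q" if "x \<in> bad_set"
      using that threshold_pos q by (intro powr_mono2) (auto simp: bad_set_def)
    then show "ennreal (t powr q) * indicator bad_set x \<le> ennreal (w x powr q)"
      by (simp add: indicator_def ennreal_leI)
  qed
  also have "\<dots> \<le> ennreal I"
    by (fact I(1))
  finally show ?thesis
    using I(2) by simp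
qed

lemma measure_\<pi>_bad_set_le:
  assumes q: "1 \<le> q" and I: "(\<integral>\<^sup>+x. ennreal (w x powr q) \<partial>\<mu>) \<le> ennreal I" "0 \<le> I"
  shows "t powr (q - 1) * measure \<pi> bad_set \<le> I"
proof -
  have "emeasure \<pi> bad_set = (\<integral>\<^sup>+x. ennreal (w x) * indicator bad_set x \<partial>\<mu>)"
    by (subst \<pi>_eq_density) (simp add: emeasure_density)
  then have "ennreal (t powr (q - 1) * measure \<pi> bad_set)
      = ennreal (t powr (q - 1)) * (\<integral>\<^sup>+x. ennreal (w x) * indicator bad_set x \<partial>\<mu>)"
    by (simp add: \<pi>.emeasure_eq_measure ennreal_mult)
  also have "\<dots> = (\<integral>\<^sup>+x. ennreal (t powr (q - 1) * w x) * indicator bad_set x \<partial>\<mu>)"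
    by (simp add: nn_integral_cmult[symmetric] ennreal_mult mult.assoc)
  also have "\<dots> \<le> (\<integral>\<^sup>+x. ennreal (w x powr q) \<partial>\<mu>)"
  proof (rule nn_integral_mono)
    fix x
    have "t powr (q - 1) * w x \<le> w x powr q" if "x \<in> bad_set"
    proof -
      have w: "0 < w x" "t < w x"
        using that threshold_pos by (auto simp: bad_set_def)
      then have "t powr (q - 1) * w x \<le> w x powr (q - 1) * w x"
        using threshold_pos q by (intro mult_right_mono powr_mono2) auto
      also have "\<dots> = w x powr q"
        using w by (simp add: powr_diff)
      finally show ?thesis .
    qed
    then show "ennreal (t powr (q - 1) * w x) * indicator bad_set x \<le> ennreal (w x powr q)"
      by (simp add: indicator_def ennreal_leI)
  qed
  also have "\<dots> \<le> ennreal I"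
    by (fact I(1))
  finally show ?thesis
    using I(2) by simp
qed

end

section \<open>Moments of the density ratio and the mixing time\<close>

lemma one_le_ln_inverse:
  fixes \<epsilon> :: real
  assumes "0 < \<epsilon>" "\<epsilon> \<le> 1/3"
  shows "1 \<le> ln (1 / \<epsilon>)"
proof -
  have "\<epsilon> * exp 1 \<le> 1"
    using mult_left_mono[OF exp_le, of \<epsilon>] assms by linarith
  then have "exp 1 \<le> 1 / \<epsilon>"
    using assms by (simp add: field_simps)
  then show ?thesis
    using assms by (subst ln_ge_iff) auto
qed

lemma one_minus_power_le_exp:
  fixes \<beta> :: real
  assumes "\<beta> \<le> 1"
  shows "(1 - \<beta>) ^ N \<le> exp (- \<beta> * N)"
proof -
  have "(1 - \<beta>) ^ N \<le> exp (- \<beta>) ^ N"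
    using assms exp_ge_add_one_self[of "- \<beta>"] by (intro power_mono) auto
  then show ?thesis
    by (simp add: exp_of_nat_mult[symmetric] mult.commute)
qed

lemma iteration_count_exists:
  fixes \<epsilon> \<beta> E :: real
  assumes \<epsilon>: "0 < \<epsilon>" "\<epsilon> < 1/40000" and \<beta>: "1/12 \<le> \<beta>" "\<beta> \<le> 1"
    and E: "0 \<le> E" "E \<le> 24 * \<epsilon>^4"
  shows "\<exists>N::nat. real N \<le> 25 * ln (1 / \<epsilon>) \<and> (1 - \<beta>) ^ N + (real N + 1)^2 * E \<le> \<epsilon>"
proof -
  define L where "L = ln (1 / \<epsilon>)"
  define N where "N = nat \<lceil>24 * L\<rceil>"
  have L: "1 \<le> L" "L \<le> 1 / \<epsilon>"
    unfolding L_def using one_le_ln_inverse \<epsilon> by (auto intro: less_imp_le ln_less_self)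
  have N: "24 * L \<le> real N" "real N \<le> 24 * L + 1"
    using L by (auto simp: N_def)
  have "(1 - \<beta>) ^ N \<le> exp (- \<beta> * N)"
    using \<beta>(2) by (rule one_minus_power_le_exp)
  also have "\<dots> \<le> exp (- 2 * L)"
    using \<beta> N mult_mono[OF \<beta>(1) N(1)] L by simp
  also have "\<dots> = \<epsilon>^2"
    using \<epsilon> exp_of_nat_mult[of 2 "ln \<epsilon>"] by (simp add: L_def ln_div)
  finally have geometric: "(1 - \<beta>) ^ N \<le> \<epsilon>^2" .
  have "real N + 1 \<le> 26 * (1 / \<epsilon>)"
    using N L by linarith
  then have "(real N + 1)^2 * E \<le> (26 * (1 / \<epsilon>))^2 * (24 * \<epsilon>^4)"
    using E by (intro mult_mono power_mono) auto
  also have "\<dots> = 16224 * \<epsilon>^2"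
    using \<epsilon> by (simp add: field_simps power2_eq_square power4_eq_xxxx)
  finally have "(1 - \<beta>) ^ N + (real N + 1)^2 * E \<le> 16225 * \<epsilon>^2"
    using geometric by simp
  also have "\<dots> \<le> \<epsilon>"
    using \<epsilon> by (simp add: power2_eq_square)
  finally show ?thesis
    using N L by (intro exI[of _ N]) (simp add: L_def)
qed

lemma renyi_le_imp_moment_le:
  fixes \<mu> \<pi> :: "'a measure"
  assumes q: "1 < q" and R: "renyi q \<pi> \<mu> \<le> ereal r"
  shows "absolutely_continuous \<mu> \<pi>"
    and "(\<integral>\<^sup>+x. ennreal (enn2real (RN_deriv \<mu> \<pi> x) powr q) \<partial>\<mu>) \<le> ennreal (exp ((q - 1) * r))"
proof -
  define I where "I = (\<integral>\<^sup>+x. ennreal (enn2real (RN_deriv \<mu> \<pi> x) powr q) \<partial>\<mu>)"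
  have renyi_eq: "renyi q \<pi> \<mu> = (if \<not> absolutely_continuous \<mu> \<pi> then \<infinity>
      else if I = \<infinity> then \<infinity> else ereal (ln (enn2real I) / (q - 1)))"
    using q by (simp add: renyi_def Let_def I_def)
  show ac: "absolutely_continuous \<mu> \<pi>"
    using R renyi_eq by (auto split: if_splits)
  have finite: "I \<noteq> \<top>"
    using R renyi_eq ac by auto
  have ln_I: "ln (enn2real I) \<le> (q - 1) * r"
    using R q by (simp add: renyi_eq ac finite divide_le_eq mult.commute)
  have "enn2real I \<le> exp ((q - 1) * r)"
  proof (cases "enn2real I = 0")
    case False
    then have "enn2real I = exp (ln (enn2real I))"
      by (simp add: less_le)
    then show ?thesis
      using ln_I by (metis exp_le_cancel_iff)
  qed simp
  then show "I \<le> ennreal (exp ((q - 1) * r))"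
    using finite by (metis ennreal_enn2real ennreal_leI less_top)
qed

lemma renyi_exponent_le_1:
  fixes q C \<gamma> :: real
  assumes q: "0 < q" and C: "0 \<le> C" "C \<le> q powr (- (\<gamma> + 1))"
  shows "(q - 1) * (C * q powr \<gamma>) \<le> 1"
proof -
  have "(q - 1) * (C * q powr \<gamma>) \<le> q * (C * q powr \<gamma>)"
    using C by (intro mult_right_mono) auto
  also have "\<dots> = C * q powr (\<gamma> + 1)"
    using q by (simp add: powr_add)
  also have "\<dots> \<le> q powr (- (\<gamma> + 1)) * q powr (\<gamma> + 1)"
    using C by (intro mult_right_mono) auto
  also have "\<dots> = 1"
    using q by (simp flip: powr_add)
  finally show ?thesis .
qed

lemma (in imh) tv_dist_law_le_epsilon:
  fixes \<epsilon> :: real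
  assumes \<epsilon>: "0 < \<epsilon>" "\<epsilon> < 1/40000"
    and moment: "(\<integral>\<^sup>+x. ennreal (w x powr (4 * ln (1 / \<epsilon>))) \<partial>\<mu>) \<le> ennreal (exp 1)"
  shows "\<exists>N::nat. real N \<le> 25 * ln (1 / \<epsilon>) \<and> tv_dist d (law N) \<pi> \<le> \<epsilon>"
proof -
  interpret imh_doeblin d \<mu> \<pi> "exp 1"
    by unfold_locales simp
  define L where "L = ln (1 / \<epsilon>)"
  have L: "1 \<le> L"
    using one_le_ln_inverse \<epsilon> by (simp add: L_def)
  have exp_L: "exp 1 powr (4 * L) = 1 / \<epsilon>^4"
    using \<epsilon> exp_of_nat_mult[of 4 L] by (simp add: powr_def L_def power_one_over)
  have "exp 1 powr (4 * L) * measure \<mu> bad_set \<le> exp 1"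
    using L moment by (intro measure_\<mu>_bad_set_le) (auto simp: L_def)
  then have "measure \<mu> bad_set \<le> exp 1 * \<epsilon>^4"
    using \<epsilon> unfolding exp_L by (simp add: field_simps)
  moreover have "exp 1 * \<epsilon>^4 \<le> 3 * \<epsilon>^4"
    by (rule mult_right_mono[OF exp_le]) simp
  ultimately have \<mu>B: "measure \<mu> bad_set \<le> 3 * \<epsilon>^4"
    by linarith
  have "exp 1 powr (4 * L - 1) * measure \<pi> bad_set \<le> exp 1"
    using L moment by (intro measure_\<pi>_bad_set_le) (auto simp: L_def)
  then have "measure \<pi> bad_set \<le> exp 1 * exp 1 * \<epsilon>^4"
    using \<epsilon> unfolding powr_diff exp_L by (simp add: field_simps)
  moreover have "exp 1 * exp 1 * \<epsilon>^4 \<le> 9 * \<epsilon>^4"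
    using mult_mono[OF exp_le exp_le] by (intro mult_right_mono) simp_all
  ultimately have \<pi>B: "measure \<pi> bad_set \<le> 9 * \<epsilon>^4"
    by linarith
  have "\<epsilon>^4 \<le> \<epsilon>"
    using power_decreasing[of 1 4 \<epsilon>] \<epsilon> by simp
  then have "1/12 \<le> (1 - measure \<pi> bad_set) / (2 * exp 1)"
    using \<pi>B \<epsilon> exp_le by (simp add: field_simps)
  then have \<beta>: "1/12 \<le> doeblin_mass" "doeblin_mass \<le> 1"
    using doeblin_mass_ge doeblin_mass_bounds(2) by linarith+
  obtain N where "real N \<le> 25 * L"
    and "(1 - doeblin_mass) ^ N + (real N + 1)^2 * (2 * (measure \<mu> bad_set + measure \<pi> bad_set)) \<le> \<epsilon>"
    using iteration_count_exists[OF \<epsilon> \<beta>, of "2 * (measure \<mu> bad_set + measure \<pi> bad_set)"] \<mu>B \<pi>B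
    by (auto simp: L_def)
  then show ?thesis
    using tv_dist_law_le[of N] by (auto simp: L_def)
qed

lemma imh_mixing_time:
  fixes \<gamma> \<epsilon> C\<^sub>R :: real
  assumes \<mu>: "prob_space \<mu>" "sets \<mu> = sets (Rd d)" and \<pi>: "prob_space \<pi>" "sets \<pi> = sets (Rd d)"
    and \<epsilon>: "0 < \<epsilon>" "\<epsilon> < 1/40000"
    and C\<^sub>R: "0 < C\<^sub>R" "C\<^sub>R \<le> 4 powr (- (\<gamma> + 1)) * ln (1 / \<epsilon>) powr (- (\<gamma> + 1))"
    and renyi: "\<And>q. 1 \<le> q \<Longrightarrow> q \<le> 4 * ln (1 / \<epsilon>) \<Longrightarrow> renyi q \<pi> \<mu> \<le> ereal (C\<^sub>R * q powr \<gamma>)"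
  shows "\<exists>N::nat. real N \<le> 25 * ln (1 / \<epsilon>) \<and> tv_dist d (imh_law d \<mu> \<pi> N) \<pi> \<le> \<epsilon>"
proof -
  define q where "q = 4 * ln (1 / \<epsilon>)"
  have q: "4 \<le> q"
    using one_le_ln_inverse \<epsilon> by (simp add: q_def)
  have R: "renyi q \<pi> \<mu> \<le> ereal (C\<^sub>R * q powr \<gamma>)"
    using q by (intro renyi) (simp_all add: q_def)
  have "C\<^sub>R \<le> q powr (- (\<gamma> + 1))"
    using C\<^sub>R(2) one_le_ln_inverse \<epsilon> by (simp add: q_def powr_mult)
  then have "(q - 1) * (C\<^sub>R * q powr \<gamma>) \<le> 1"
    using q C\<^sub>R(1) by (intro renyi_exponent_le_1) auto
  then have moment: "(\<integral>\<^sup>+x. ennreal (enn2real (RN_deriv \<mu> \<pi> x) powr q) \<partial>\<mu>) \<le> ennreal (exp 1)"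
    using renyi_le_imp_moment_le(2)[OF _ R] q by (auto intro: order_trans ennreal_leI)
  interpret imh d \<mu> \<pi>
    using q by (intro imh.intro \<mu> \<pi> renyi_le_imp_moment_le(1)[OF _ R]) simp
  show ?thesis
    using \<epsilon> moment[unfolded q_def] by (rule tv_dist_law_le_epsilon)
qed

theorem theorem3:
  shows "\<forall>\<gamma>::real. \<gamma> > 0 \<longrightarrow>
    (\<exists>C>0. \<exists>c>0. \<exists>K>0. \<exists>\<epsilon>\<^sub>0::real. 0 < \<epsilon>\<^sub>0 \<and> \<epsilon>\<^sub>0 < 1 \<and>
      (\<forall>(d::nat) (\<epsilon>::real) (\<mu>::(nat \<Rightarrow> real) measure) (\<pi>::(nat \<Rightarrow> real) measure) (Ch::real) (C\<^sub>R::real).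
         0 < \<epsilon> \<and> \<epsilon> < \<epsilon>\<^sub>0 \<and>
         prob_space \<mu> \<and> sets \<mu> = sets (Rd d) \<and>
         prob_space \<pi> \<and> sets \<pi> = sets (Rd d) \<and>
         Ch > 0 \<and> cheeger d \<pi> Ch \<and>
         C\<^sub>R > 0 \<and> C\<^sub>R \<le> c * ln (1 / \<epsilon>) powr (- (\<gamma> + 1)) \<and>
         (\<forall>q::real. 1 \<le> q \<and> q \<le> C * ln (1 / \<epsilon>) \<longrightarrow>
             renyi q \<mu> \<pi> \<le> ereal (C\<^sub>R * q powr \<gamma>) \<and> renyi q \<pi> \<mu> \<le> ereal (C\<^sub>R * q powr \<gamma>)) \<and>
         atomless \<mu> \<and> atomless \<pi>
       \<longrightarrow> (\<exists>N::nat. real N \<le> K * ln (1 / \<epsilon>) \<and> tv_dist d (imh_law d \<mu> \<pi> N) \<pi> \<le> \<epsilon>)))"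
  apply (intro allI impI)
  subgoal for \<gamma>
    apply (rule exI[of _ 4], rule conjI, simp)
    apply (rule exI[of _ "4 powr (- (\<gamma> + 1))"], rule conjI, simp)
    apply (rule exI[of _ 25], rule conjI, simp)
    apply (rule exI[of _ "1/40000"], intro conjI, simp, simp)
    apply (intro allI impI, elim conjE)
    apply (rule imh_mixing_time)
    by auto
  done

end
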